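(* Let $k\ge3$ and $1\le s\le k$, $\mathbf n=(n_1,\dots,n_k)$, $r\le\min\{n_1,\dots,n_s\}$. If a tensor $\mathcal A\in P_s(\mathbf n,r)$ has a decomposition $\mathcal A=\sum_{i=1}^r\sigma_i\mathbf a^{(1)}_i\otimes\cdots\otimes\mathbf a^{(k)}_i$ of the type defining $P_s(\mathbf n,r)$ in which the factor matrices $A^{(l)}=[\mathbf a^{(l)}_1,\dots,\mathbf a^{(l)}_r]$, $l=s+1,\dots,k$, have full column rank, then $\mathcal A$ is identifiable. Moreover, if $s\ge3$, then every tensor in $P_s(\mathbf n,r)$ is identifiable.
   Context: $P_s(\mathbf n,r)$ is the set of tensors $\sum_{i=1}^r\sigma_i\mathbf a^{(1)}_i\otimes\cdots\otimes\mathbf a^{(k)}_i$ with $\sigma_i\in\mathbb R$, all $\mathbf a^{(l)}_i\in\mathbb R^{n_l}$ unit vectors, and for each $l\le s$ the vectors $\mathbf a^{(l)}_1,\dots,\mathbf a^{(l)}_r$ pairwise orthogonal. The rank of a tensor is the least $m$ such that it is a sum of $m$ rank-one tensors $\lambda_j\mathbf u^{(1)}_j\otimes\cdots\otimes\mathbf u^{(k)}_j$; a rank decomposition uses exactly the rank many terms. A tensor is identifiable if its rank decomposition is essentially unique: any two rank decompositions $\sum_j\lambda_j\mathbf u^{(1)}_j\otimes\cdots\otimes\mathbf u^{(k)}_j=\sum_j\mu_j\mathbf v^{(1)}_j\otimes\cdots\otimes\mathbf v^{(k)}_j$ differ by a permutation $\sigma$ of the terms and nonzero rescalings $\mathbf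 v^{(i)}_{\sigma(j)}=\alpha^{(i)}_j\mathbf u^{(i)}_j$ with $(\prod_i\alpha^{(i)}_j)\mu_{\sigma(j)}=\lambda_j$. *)

theory Defs
  imports Complex_Main "HOL-Combinatorics.Permutations"
begin

text \<open>The order-k tensor is indexed by modes 0,...,k-1 (mode l+1 of the
paper is mode l here). A vector of R^(n l) is a function nat => real vanishing
outside {0..<n l}. A tensor of size n 0 x ... x n (k-1) is a function on multi-indices
(nat => nat) => real; all tensors considered are finite sums of rank-one tensors whose
factor vectors lie in the respective R^(n l), so equality of such functions is equality
of tensors. A family of r terms with factors is given by u :: nat => nat => nat => real,
where u j l is the mode-l factor vector of term j.\<close>

definition in_Rn :: "nat \<Rightarrow> (nat \<Rightarrow> real) \<Rightarrow> bool" where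
  "in_Rn m v \<longleftrightarrow> (\<forall>x\<ge>m. v x = 0)"

definition ip :: "nat \<Rightarrow> (nat \<Rightarrow> real) \<Rightarrow> (nat \<Rightarrow> real) \<Rightarrow> real" where
  "ip m v w = (\<Sum>x<m. v x * w x)"

definition unit_vec :: "nat \<Rightarrow> (nat \<Rightarrow> real) \<Rightarrow> bool" where
  "unit_vec m v \<longleftrightarrow> in_Rn m v \<and> ip m v v = 1"

definition tsum :: "nat \<Rightarrow> nat \<Rightarrow> (nat \<Rightarrow> real) \<Rightarrow> (nat \<Rightarrow> nat \<Rightarrow> nat \<Rightarrow> real)
    \<Rightarrow> ((nat \<Rightarrow> nat) \<Rightarrow> real)" where
  "tsum k m lam u = (\<lambda>idx. \<Sum>j<m. lam j * (\<Prod>l<k. u j l (idx l)))"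

definition is_decomp :: "nat \<Rightarrow> (nat \<Rightarrow> nat) \<Rightarrow> nat \<Rightarrow> (nat \<Rightarrow> real)
    \<Rightarrow> (nat \<Rightarrow> nat \<Rightarrow> nat \<Rightarrow> real) \<Rightarrow> ((nat \<Rightarrow> nat) \<Rightarrow> real) \<Rightarrow> bool" where
  "is_decomp k n m lam u T \<longleftrightarrow>
     (\<forall>j<m. \<forall>l<k. in_Rn (n l) (u j l)) \<and> T = tsum k m lam u"

definition tensor_rank :: "nat \<Rightarrow> (nat \<Rightarrow> nat) \<Rightarrow> ((nat \<Rightarrow> nat) \<Rightarrow> real) \<Rightarrow> nat" where
  "tensor_rank k n T = (LEAST m. \<exists>lam u. is_decomp k n m lam u T)"

definition identifiable :: "nat \<Rightarrow> (nat \<Rightarrow> nat) \<Rightarrow> ((nat \<Rightarrow> nat) \<Rightarrow> real) \<Rightarrow> bool" where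
  "identifiable k n T \<longleftrightarrow>
    (\<forall>lam u mu v. is_decomp k n (tensor_rank k n T) lam u T \<and>
                  is_decomp k n (tensor_rank k n T) mu v T \<longrightarrow>
      (\<exists>\<sigma> \<alpha>. \<sigma> permutes {..<tensor_rank k n T} \<and>
         (\<forall>j<tensor_rank k n T.
            (\<forall>i<k. \<alpha> j i \<noteq> (0::real) \<and> v (\<sigma> j) i = (\<lambda>x. \<alpha> j i * u j i x)) \<and>
            (\<Prod>i<k. \<alpha> j i) * mu (\<sigma> j) = lam j)))"

definition P_decomp :: "nat \<Rightarrow> (nat \<Rightarrow> nat) \<Rightarrow> nat \<Rightarrow> nat \<Rightarrow> (nat \<Rightarrow> real)
    \<Rightarrow> (nat \<Rightarrow> nat \<Rightarrow> nat \<Rightarrow> real) \<Rightarrow> ((nat \<Rightarrow> nat) \<Rightarrow> real) \<Rightarrow> bool" where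
  "P_decomp k n s r sig a T \<longleftrightarrow>
     (\<forall>i<r. \<forall>l<k. unit_vec (n l) (a i l)) \<and>
     (\<forall>l<s. \<forall>i<r. \<forall>j<r. i \<noteq> j \<longrightarrow> ip (n l) (a i l) (a j l) = 0) \<and>
     T = tsum k r sig a"

definition P_set :: "nat \<Rightarrow> (nat \<Rightarrow> nat) \<Rightarrow> nat \<Rightarrow> nat \<Rightarrow> ((nat \<Rightarrow> nat) \<Rightarrow> real) set" where
  "P_set k n s r = {T. \<exists>sig a. P_decomp k n s r sig a T}"

definition full_col_rank :: "nat \<Rightarrow> nat \<Rightarrow> (nat \<Rightarrow> nat \<Rightarrow> real) \<Rightarrow> bool" where
  "full_col_rank m r c \<longleftrightarrow>
     (\<forall>coef. (\<forall>x<m. (\<Sum>j<r. coef j * c j x) = 0) \<longrightarrow> (\<forall>j<r. coef j = (0::real)))"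

end

theory Submission
  imports Defs "HOL-Library.Function_Algebras"
begin

text \<open>
After discarding the terms of weight zero, the decomposition has R terms whose first factors are
orthonormal, whose second and third factors are linearly independent (orthonormal, or of full
column rank by hypothesis), and whose factors are all nonzero. Write the tensor as
sum_j lam_j u_j (x) w_j, where the slice w_j is the outer product of the factors of term j in
the modes 2, ..., k. The slices are linearly independent, and contracting the first mode with
u_j shows that w_j lies in the span of the slices W_i of any other decomposition. Hence the rank
is R, and for another R-term decomposition the W_i span the same space and are independent.
Each W_i has rank one across the split (mode 2 | modes 3, ..., k), whereas w_j = a_j (x) z_j
with both families a_j and z_j independent; so W_i is a multiple of a single w_j. The resulting
matching is a permutation, comparing first factors yields the proportionality of the whole terms,
and proportional rank-one tensors have proportional factors. Two rank decompositions are then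
related through the given one.
\<close>

interpretation fun_vec: vector_space "\<lambda>(c::real) (f::'a \<Rightarrow> real) x. c * f x"
  by unfold_locales (auto simp: fun_eq_iff algebra_simps)

lemma sum_fun_apply: "(\<Sum>i\<in>A. f i) x = (\<Sum>i\<in>A. f i x)" for f :: "'i \<Rightarrow> 'a \<Rightarrow> real"
  by (induction A rule: infinite_finite_induct) auto

section \<open>Linear independence of finite families of functions\<close>

definition lin_indep_on :: "'a set \<Rightarrow> nat \<Rightarrow> (nat \<Rightarrow> 'a \<Rightarrow> real) \<Rightarrow> bool" where
  "lin_indep_on D R f \<longleftrightarrow> (\<forall>c. (\<forall>x\<in>D. (\<Sum>j<R. c j * f j x) = 0) \<longrightarrow> (\<forall>j<R. c j = 0))"

lemma full_col_rank_iff_lin_indep_on: "full_col_rank N R f \<longleftrightarrow> lin_indep_on {..<N} R f"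
  by (simp add: full_col_rank_def lin_indep_on_def Ball_def)

lemma lin_indep_on_mono: "lin_indep_on D R f \<Longrightarrow> D \<subseteq> E \<Longrightarrow> lin_indep_on E R f"
  unfolding lin_indep_on_def by blast

lemma lin_indep_onD:
  assumes "lin_indep_on D R f" "J \<subseteq> {..<R}" "\<forall>x\<in>D. (\<Sum>j\<in>J. c j * f j x) = 0" "j \<in> J"
  shows "c j = 0"
proof -
  let ?c = "\<lambda>i. if i \<in> J then c i else 0"
  have "(\<Sum>i<R. ?c i * f i x) = (\<Sum>i\<in>J. c i * f i x)" for x
    by (rule sum.mono_neutral_cong_right) (use assms(2) in auto)
  then have "\<forall>x\<in>D. (\<Sum>i<R. ?c i * f i x) = 0" using assms(3) by simp
  then have "\<forall>i<R. ?c i = 0" using assms(1) unfolding lin_indep_on_def by (elim allE[of _ ?c]) simp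
  then show ?thesis using assms(2,4) by force
qed

lemma lin_indep_on_nonzero:
  assumes "lin_indep_on D R f" "i < R"
  shows "\<exists>x\<in>D. f i x \<noteq> 0"
  using lin_indep_onD[OF assms(1), of "{i}" "\<lambda>_. 1" i] assms(2) by auto

lemma lin_indep_on_pair:
  assumes "lin_indep_on D R f" "i < R" "j < R" "i \<noteq> j"
    and "\<forall>x\<in>D. \<alpha> * f i x + \<beta> * f j x = 0"
  shows "\<alpha> = 0" "\<beta> = 0"
proof -
  have "(if l = i then \<alpha> else \<beta>) = 0" if "l \<in> {i, j}" for l
    by (rule lin_indep_onD[OF assms(1), of "{i, j}" "\<lambda>l. if l = i then \<alpha> else \<beta>"])
      (use assms that in auto)
  from this[of i] this[of j] show "\<alpha> = 0" "\<beta> = 0" using assms(4) by auto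
qed

lemma lin_indep_on_reindex:
  assumes f: "lin_indep_on D r f" and h: "inj_on h {..<R}" "h ` {..<R} \<subseteq> {..<r}"
  shows "lin_indep_on D R (\<lambda>i. f (h i))"
  unfolding lin_indep_on_def
proof (intro allI impI)
  fix c i assume c: "\<forall>x\<in>D. (\<Sum>i<R. c i * f (h i) x) = 0" and i: "i < R"
  let ?c = "\<lambda>j. c (inv_into {..<R} h j)"
  have "\<forall>x\<in>D. (\<Sum>j\<in>h ` {..<R}. ?c j * f j x) = 0"
    using c by (simp add: sum.reindex[OF h(1)] inv_into_f_f[OF h(1)])
  then have "?c (h i) = 0" by (rule lin_indep_onD[OF f h(2)]) (use i in simp)
  then show "c i = 0" using i by (simp add: inv_into_f_f[OF h(1)])
qed

lemma orthonormal_imp_lin_indep_on: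
  assumes "\<And>i j. i < R \<Longrightarrow> j < R \<Longrightarrow> ip N (f i) (f j) = (if i = j then 1 else 0)"
  shows "lin_indep_on {..<N} R f"
  unfolding lin_indep_on_def
proof (intro allI impI)
  fix c i assume c: "\<forall>x\<in>{..<N}. (\<Sum>j<R. c j * f j x) = 0" and i: "i < R"
  have "0 = (\<Sum>x<N. f i x * (\<Sum>j<R. c j * f j x))" using c by simp
  also have "\<dots> = (\<Sum>j<R. c j * ip N (f i) (f j))"
    by (simp add: ip_def sum_distrib_left sum.swap[of _ "{..<N}"] mult_ac)
  also have "\<dots> = (\<Sum>j<R. if j = i then c i else 0)"
    by (rule sum.cong) (use assms i in auto)
  also have "\<dots> = c i" using i by simp
  finally show "c i = 0" by simp
qed

lemma unit_vec_nonzero: "unit_vec m v \<Longrightarrow> \<exists>x. v x \<noteq> 0"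
  unfolding unit_vec_def ip_def by (metis (no_types, lifting) mult_zero_left sum.neutral zero_neq_one)

lemma span_image_lessThan_iff:
  "g \<in> fun_vec.span (f ` {..<R}) \<longleftrightarrow> (\<exists>c. g = (\<lambda>t. \<Sum>j<R. c j * f j t))"
  for f :: "nat \<Rightarrow> 'a \<Rightarrow> real"
proof
  assume "g \<in> fun_vec.span (f ` {..<R})"
  then show "\<exists>c. g = (\<lambda>t. \<Sum>j<R. c j * f j t)"
  proof (induction rule: fun_vec.span_induct_alt)
    case base
    show ?case by (rule exI[of _ "\<lambda>_. 0"]) (simp add: fun_eq_iff)
  next
    case (step a x y)
    then obtain i d where i: "i < R" and "x = f i" "y = (\<lambda>t. \<Sum>j<R. d j * f j t)" by blast
    moreover have "(\<Sum>j<R. (if j = i then d j + a else d j) * f j t) = a * f i t + (\<Sum>j<R. d j * f j t)"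
      for t
    proof -
      have "(\<Sum>j<R. (if j = i then d j + a else d j) * f j t)
          = (\<Sum>j<R. d j * f j t + (if j = i then a * f j t else 0))"
        by (rule sum.cong) (auto simp: distrib_right)
      also have "\<dots> = a * f i t + (\<Sum>j<R. d j * f j t)" using i by (simp add: sum.distrib)
      finally show ?thesis .
    qed
    ultimately show ?case by (intro exI[of _ "\<lambda>j. if j = i then d j + a else d j"]) auto
  qed
next
  assume "\<exists>c. g = (\<lambda>t. \<Sum>j<R. c j * f j t)"
  then obtain c where "g = (\<lambda>t. \<Sum>j<R. c j * f j t)" by blast
  then have "g = (\<Sum>j<R. (\<lambda>t. c j * f j t))" by (simp add: fun_eq_iff sum_fun_apply)
  also have "\<dots> \<in> fun_vec.span (f ` {..<R})"
    by (intro fun_vec.span_sum fun_vec.span_scale fun_vec.span_base) auto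
  finally show "g \<in> fun_vec.span (f ` {..<R})" .
qed

lemma lin_indep_on_UNIV_iff:
  "lin_indep_on UNIV R f \<longleftrightarrow> inj_on f {..<R} \<and> fun_vec.independent (f ` {..<R})"
  for f :: "nat \<Rightarrow> 'a \<Rightarrow> real"
proof
  assume f: "lin_indep_on UNIV R f"
  show "inj_on f {..<R} \<and> fun_vec.independent (f ` {..<R})"
  proof
    show inj: "inj_on f {..<R}"
    proof (rule inj_onI, rule ccontr)
      fix i j assume "i \<in> {..<R}" "j \<in> {..<R}" "f i = f j" "i \<noteq> j"
      then show False using lin_indep_on_pair(1)[OF f, of i j 1 "-1"] by simp
    qed
    show "fun_vec.independent (f ` {..<R})"
    proof (rule fun_vec.independent_if_scalars_zero)
      fix c :: "('a \<Rightarrow> real) \<Rightarrow> real" and g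
      assume sum: "(\<Sum>g\<in>f ` {..<R}. (\<lambda>t. c g * g t)) = 0" and "g \<in> f ` {..<R}"
      then obtain i where "i < R" "g = f i" by blast
      moreover have "\<forall>t. (\<Sum>j<R. c (f j) * f j t) = 0"
        using fun_cong[OF sum] by (simp add: sum_fun_apply sum.reindex[OF inj])
      ultimately show "c g = 0"
        using f unfolding lin_indep_on_def by (elim allE[of _ "\<lambda>j. c (f j)"]) auto
    qed simp
  qed
next
  assume "inj_on f {..<R} \<and> fun_vec.independent (f ` {..<R})"
  then have inj: "inj_on f {..<R}" and ind: "fun_vec.independent (f ` {..<R})" by auto
  show "lin_indep_on UNIV R f"
    unfolding lin_indep_on_def
  proof (intro allI impI)
    fix c j assume c: "\<forall>x\<in>UNIV. (\<Sum>j<R. c j * f j x) = 0" and j: "j < R"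
    let ?c = "\<lambda>g. c (inv_into {..<R} f g)"
    have "(\<Sum>g\<in>f ` {..<R}. (\<lambda>t. ?c g * g t)) = (\<lambda>t. \<Sum>j<R. ?c (f j) * f j t)"
      by (simp add: fun_eq_iff sum_fun_apply sum.reindex[OF inj])
    also have "\<dots> = (\<lambda>t. \<Sum>j<R. c j * f j t)"
      using inj by (intro ext sum.cong) auto
    finally have "(\<Sum>g\<in>f ` {..<R}. (\<lambda>t. ?c g * g t)) = 0" using c by (simp add: fun_eq_iff)
    then have "?c (f j) = 0"
      using ind j by (auto simp: fun_vec.dependent_finite)
    then show "c j = 0" using inj j by simp
  qed
qed

lemma lin_indep_le_card_span:
  fixes w :: "nat \<Rightarrow> 'a \<Rightarrow> real"
  assumes "lin_indep_on UNIV R w" "finite S" "w ` {..<R} \<subseteq> fun_vec.span S"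
  shows "R \<le> card S"
  using fun_vec.independent_span_bound[OF assms(2) _ assms(3)] assms(1)
  by (simp add: lin_indep_on_UNIV_iff card_image)

lemma lin_indep_span_exchange:
  fixes w W :: "nat \<Rightarrow> 'a \<Rightarrow> real"
  assumes w: "lin_indep_on UNIV R w" and sp: "w ` {..<R} \<subseteq> fun_vec.span (W ` {..<R})"
  shows "lin_indep_on UNIV R W" "W ` {..<R} \<subseteq> fun_vec.span (w ` {..<R})"
proof -
  let ?Sw = "w ` {..<R}" and ?SW = "W ` {..<R}"
  have "R \<le> card ?SW" by (rule lin_indep_le_card_span[OF w _ sp]) simp
  moreover have "card ?SW \<le> R" using card_image_le[of "{..<R}" W] by simp
  ultimately have card_SW: "card ?SW = R" by simp
  have "fun_vec.independent ?SW"
  proof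
    assume "fun_vec.dependent ?SW"
    then obtain a where a: "a \<in> ?SW" "a \<in> fun_vec.span (?SW - {a})"
      unfolding fun_vec.dependent_def by blast
    have "fun_vec.span ?SW = fun_vec.span (?SW - {a})"
      using fun_vec.span_redundant[OF a(2)] unfolding insert_Diff[OF a(1)] .
    then have "w ` {..<R} \<subseteq> fun_vec.span (?SW - {a})" using sp by (simp only:)
    then have "R \<le> card (?SW - {a})" by (rule lin_indep_le_card_span[OF w, rotated]) simp
    moreover have "card (?SW - {a}) = R - 1" using a(1) card_SW by simp
    moreover have "R > 0" using a(1) by auto
    ultimately show False by linarith
  qed
  then show "lin_indep_on UNIV R W"
    using card_SW by (simp add: lin_indep_on_UNIV_iff eq_card_imp_inj_on)
  show "?SW \<subseteq> fun_vec.span ?Sw"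
  proof (rule ccontr)
    assume "\<not> ?SW \<subseteq> fun_vec.span ?Sw"
    then obtain b where b: "b \<in> ?SW" "b \<notin> fun_vec.span ?Sw" by blast
    have inj_w: "inj_on w {..<R}" and ind_w: "fun_vec.independent ?Sw"
      using w by (simp_all add: lin_indep_on_UNIV_iff)
    have "b \<notin> ?Sw" using b(2) fun_vec.span_base[of b ?Sw] by blast
    then have card_insert: "card (insert b ?Sw) = Suc R" by (simp add: card_image[OF inj_w])
    have "fun_vec.independent (insert b ?Sw)" by (rule fun_vec.independent_insertI[OF b(2) ind_w])
    moreover have "insert b ?Sw \<subseteq> fun_vec.span ?SW" using fun_vec.span_base[OF b(1)] sp by simp
    ultimately have "card (insert b ?Sw) \<le> card ?SW"
      using fun_vec.independent_span_bound[of ?SW "insert b ?Sw"] by simp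
    then show False using card_insert card_SW by simp
  qed
qed

section \<open>Rank-one tensors\<close>

definition outer_prod :: "nat set \<Rightarrow> (nat \<Rightarrow> nat \<Rightarrow> real) \<Rightarrow> (nat \<Rightarrow> nat) \<Rightarrow> real" where
  "outer_prod L x idx = (\<Prod>l\<in>L. x l (idx l))"

lemma outer_prod_upd_notin: "a \<notin> L \<Longrightarrow> outer_prod L x (idx(a := t)) = outer_prod L x idx"
  unfolding outer_prod_def by (rule prod.cong) auto

lemma outer_prod_upd:
  assumes "finite L" "a \<in> L"
  shows "outer_prod L x (idx(a := t)) = x a t * outer_prod (L - {a}) x idx"
  using assms by (simp add: outer_prod_def prod.remove outer_prod_upd_notin[unfolded outer_prod_def])

lemma outer_prod_split_0:
  "1 \<le> k \<Longrightarrow> outer_prod {..<k} x idx = x 0 (idx 0) * outer_prod {1..<k} x idx"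
  using outer_prod_upd[of "{..<k}" 0 x idx "idx 0"] by (simp add: atLeast1_lessThan_eq_remove0)

lemma tsum_upd_0:
  assumes "1 \<le> k"
  shows "tsum k m lam u (idx(0 := x)) = (\<Sum>i<m. lam i * u i 0 x * outer_prod {1..<k} (u i) idx)"
proof -
  have "{..<k} - {0} = {1..<k}" by auto
  then show ?thesis
    using outer_prod_upd[of "{..<k}" 0 "u _" idx x] assms
    by (simp add: tsum_def outer_prod_def[symmetric] mult.assoc)
qed

lemma tsum_contract_0:
  assumes "1 \<le> k"
  shows "(\<Sum>x<N. y x * tsum k m lam u (idx(0 := x)))
       = (\<Sum>i<m. lam i * ip N y (u i 0) * outer_prod {1..<k} (u i) idx)"
proof -
  have "(\<Sum>x<N. y x * tsum k m lam u (idx(0 := x)))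
      = (\<Sum>i<m. \<Sum>x<N. lam i * (y x * u i 0 x) * outer_prod {1..<k} (u i) idx)"
    by (simp add: tsum_upd_0[OF assms] sum_distrib_left mult_ac sum.swap[of _ "{..<N}"])
  also have "\<dots> = (\<Sum>i<m. lam i * ip N y (u i 0) * outer_prod {1..<k} (u i) idx)"
    by (simp add: ip_def sum_distrib_left sum_distrib_right)
  finally show ?thesis .
qed

lemma outer_prod_lin_indep:
  assumes L: "finite L" "a \<in> L" and indep: "lin_indep_on D R (\<lambda>j. u j a)"
    and nonzero: "\<And>j l. j < R \<Longrightarrow> l \<in> L - {a} \<Longrightarrow> \<exists>t. u j l t \<noteq> 0"
  shows "lin_indep_on UNIV R (\<lambda>j. outer_prod L (u j))"
  unfolding lin_indep_on_def
proof (intro allI impI)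
  fix c j0 assume eq: "\<forall>idx\<in>UNIV. (\<Sum>j<R. c j * outer_prod L (u j) idx) = 0" and j0: "j0 < R"
  obtain idx0 where idx0: "\<forall>l\<in>L - {a}. u j0 l (idx0 l) \<noteq> 0"
    using bchoice[of "L - {a}" "\<lambda>l t. u j0 l t \<noteq> 0"] nonzero[OF j0] by blast
  have "outer_prod (L - {a}) (u j0) idx0 \<noteq> 0"
    using idx0 L(1) by (simp add: outer_prod_def)
  moreover have "\<forall>x\<in>D. (\<Sum>j<R. (c j * outer_prod (L - {a}) (u j) idx0) * u j a x) = 0"
  proof
    fix x
    have "(\<Sum>j<R. (c j * outer_prod (L - {a}) (u j) idx0) * u j a x)
        = (\<Sum>j<R. c j * outer_prod L (u j) (idx0(a := x)))"
      by (simp add: outer_prod_upd[OF L] mult_ac)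
    then show "(\<Sum>j<R. (c j * outer_prod (L - {a}) (u j) idx0) * u j a x) = 0" using eq by simp
  qed
  then have "c j0 * outer_prod (L - {a}) (u j0) idx0 = 0"
    using indep j0 unfolding lin_indep_on_def
    by (elim allE[of _ "\<lambda>j. c j * outer_prod (L - {a}) (u j) idx0"]) simp
  ultimately show "c j0 = 0" by simp
qed

lemma outer_prod_eq_scaled_factors:
  assumes S: "finite S" and c: "c \<noteq> 0"
    and eq: "\<And>idx. outer_prod S x idx = c * outer_prod S y idx"
    and nz: "outer_prod S y idx0 \<noteq> 0"
  shows "\<exists>\<beta>. (\<forall>l\<in>S. \<beta> l \<noteq> 0 \<and> x l = (\<lambda>t. \<beta> l * y l t)) \<and> (\<Prod>l\<in>S. \<beta> l) = c"
proof -
  define \<beta> where "\<beta> l = x l (idx0 l) / y l (idx0 l)" for l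
  have nzx: "outer_prod S x idx0 \<noteq> 0" using eq nz c by simp
  have factor: "\<beta> l \<noteq> 0 \<and> x l = (\<lambda>t. \<beta> l * y l t)" if l: "l \<in> S" for l
  proof -
    let ?X = "outer_prod (S - {l}) x idx0" and ?Y = "outer_prod (S - {l}) y idx0"
    have split: "x l t * ?X = c * (y l t * ?Y)" for t
      using eq[of "idx0(l := t)"] by (simp add: outer_prod_upd[OF S l])
    have nz_l: "x l (idx0 l) * ?X \<noteq> 0" "y l (idx0 l) \<noteq> 0"
      using nz nzx outer_prod_upd[OF S l, of _ idx0 "idx0 l"] by simp_all
    have "x l t = \<beta> l * y l t" for t
    proof -
      have "(x l t * y l (idx0 l) - y l t * x l (idx0 l)) * ?X
          = y l (idx0 l) * (x l t * ?X) - y l t * (x l (idx0 l) * ?X)"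
        by (simp add: algebra_simps)
      also have "\<dots> = 0" unfolding split by (simp add: algebra_simps)
      finally have "(x l t * y l (idx0 l) - y l t * x l (idx0 l)) * ?X = 0" .
      then have "x l t * y l (idx0 l) = y l t * x l (idx0 l)" using nz_l(1) by simp
      then have "x l t = y l t * x l (idx0 l) / y l (idx0 l)" using nz_l(2) by (simp add: eq_divide_eq)
      then show ?thesis by (simp add: \<beta>_def)
    qed
    moreover have "\<beta> l \<noteq> 0" using nz_l by (simp add: \<beta>_def)
    ultimately show ?thesis by blast
  qed
  moreover have "(\<Prod>l\<in>S. \<beta> l) = c"
    using eq[of idx0] nz by (simp add: \<beta>_def prod_dividef outer_prod_def)
  ultimately show ?thesis by blast
qed

text \<open>The matrix sum_j c_j b_j z_j^T has rank #{j. c_j \<noteq> 0} when both the b_j and the z_j are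
linearly independent.\<close>

lemma rank_one_sum_single_term:
  assumes b: "lin_indep_on D R b" and z: "lin_indep_on E R z"
    and eq: "\<And>y t. y \<in> D \<Longrightarrow> t \<in> E \<Longrightarrow> q y * Z t = (\<Sum>j<R. c j * (b j y * z j t))"
    and nz: "y0 \<in> D" "t0 \<in> E" "q y0 * Z t0 \<noteq> 0"
  shows "\<exists>j<R. \<forall>i<R. c i \<noteq> 0 \<longleftrightarrow> i = j"
proof -
  define \<kappa> where "\<kappa> j = c j * b j y0 / q y0" for j
  have q0: "q y0 \<noteq> 0" using nz(3) by simp
  have Z: "Z t = (\<Sum>j<R. \<kappa> j * z j t)" if "t \<in> E" for t
    using eq[OF nz(1) that] q0
    by (simp add: \<kappa>_def sum_divide_distrib[symmetric] field_simps sum_distrib_left)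
  have key: "c j * b j y = q y * \<kappa> j" if y: "y \<in> D" and j: "j < R" for y j
  proof -
    have "\<forall>t\<in>E. (\<Sum>j<R. (c j * b j y - q y * \<kappa> j) * z j t) = 0"
      using eq[OF y] Z by (simp add: algebra_simps sum_subtractf sum_distrib_left)
    then show ?thesis
      using z j unfolding lin_indep_on_def
      by (elim allE[of _ "\<lambda>j. c j * b j y - q y * \<kappa> j"]) simp
  qed
  obtain j where j: "j < R" "c j \<noteq> 0"
    using eq[OF nz(1,2)] nz(3) by (metis (no_types, lifting) mult_zero_left sum.neutral lessThan_iff)
  have "c i = 0" if i: "i < R" "i \<noteq> j" for i
  proof (rule ccontr)
    assume ci: "c i \<noteq> 0"
    have "\<forall>y\<in>D. (\<kappa> i * c j) * b j y + (- \<kappa> j * c i) * b i y = 0"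
      using key j(1) i(1) by (simp add: algebra_simps)
    from lin_indep_on_pair(1)[OF b j(1) i(1) _ this] have "\<kappa> i * c j = 0" using i(2) by simp
    then have "\<kappa> i = 0" using j(2) by simp
    then have "\<forall>y\<in>D. b i y = 0" using key[OF _ i(1)] ci by simp
    then show False using lin_indep_on_nonzero[OF b i(1)] by blast
  qed
  then show ?thesis using j by blast
qed

section \<open>Essential uniqueness\<close>

definition equiv_decomp :: "nat \<Rightarrow> nat \<Rightarrow> (nat \<Rightarrow> real) \<Rightarrow> (nat \<Rightarrow> nat \<Rightarrow> nat \<Rightarrow> real)
    \<Rightarrow> (nat \<Rightarrow> real) \<Rightarrow> (nat \<Rightarrow> nat \<Rightarrow> nat \<Rightarrow> real) \<Rightarrow> bool" where
  "equiv_decomp k m lam u mu v \<longleftrightarrow>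
    (\<exists>\<sigma> \<alpha>. \<sigma> permutes {..<m} \<and>
       (\<forall>j<m. (\<forall>i<k. \<alpha> j i \<noteq> 0 \<and> v (\<sigma> j) i = (\<lambda>x. \<alpha> j i * u j i x)) \<and>
              (\<Prod>i<k. \<alpha> j i) * mu (\<sigma> j) = lam j))"

lemma identifiable_iff_equiv_decomp:
  "identifiable k n T \<longleftrightarrow>
    (\<forall>lam u mu v. is_decomp k n (tensor_rank k n T) lam u T \<and> is_decomp k n (tensor_rank k n T) mu v T
       \<longrightarrow> equiv_decomp k (tensor_rank k n T) lam u mu v)"
  unfolding identifiable_def equiv_decomp_def ..

lemma equiv_decomp_sym:
  assumes "equiv_decomp k m lam u mu v"
  shows "equiv_decomp k m mu v lam u"
proof -
  obtain \<sigma> \<alpha> where \<sigma>: "\<sigma> permutes {..<m}"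
    and \<alpha>: "\<And>j. j < m \<Longrightarrow> (\<forall>i<k. \<alpha> j i \<noteq> 0 \<and> v (\<sigma> j) i = (\<lambda>x. \<alpha> j i * u j i x)) \<and>
                          (\<Prod>i<k. \<alpha> j i) * mu (\<sigma> j) = lam j"
    using assms unfolding equiv_decomp_def by blast
  let ?\<tau> = "inv \<sigma>"
  have "(\<forall>i<k. 1 / \<alpha> (?\<tau> j) i \<noteq> 0 \<and> u (?\<tau> j) i = (\<lambda>x. 1 / \<alpha> (?\<tau> j) i * v j i x)) \<and>
        (\<Prod>i<k. 1 / \<alpha> (?\<tau> j) i) * lam (?\<tau> j) = mu j" if j: "j < m" for j
  proof -
    have \<tau>j: "?\<tau> j < m" "\<sigma> (?\<tau> j) = j"
      using permutes_in_image[OF permutes_inv[OF \<sigma>], of j] permutes_inverses(1)[OF \<sigma>] j by auto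
    define a where "a = \<alpha> (?\<tau> j)"
    have fac: "\<forall>i<k. a i \<noteq> 0 \<and> v j i = (\<lambda>x. a i * u (?\<tau> j) i x)"
      and prod: "(\<Prod>i<k. a i) * mu j = lam (?\<tau> j)"
      using \<alpha>[OF \<tau>j(1)] unfolding \<tau>j(2) a_def by auto
    have "(\<Prod>i<k. 1 / a i) * lam (?\<tau> j) = mu j"
      using fac by (simp add: prod[symmetric] prod_dividef)
    moreover have "\<forall>i<k. 1 / a i \<noteq> 0 \<and> u (?\<tau> j) i = (\<lambda>x. 1 / a i * v j i x)"
      using fac by (simp add: fun_eq_iff)
    ultimately show ?thesis unfolding a_def by blast
  qed
  with permutes_inv[OF \<sigma>] show ?thesis
    unfolding equiv_decomp_def
    by (intro exI[of _ "inv \<sigma>"] exI[of _ "\<lambda>j i. 1 / \<alpha> (inv \<sigma> j) i"]) blast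
qed

lemma equiv_decomp_trans:
  assumes "equiv_decomp k m lam u mu v" "equiv_decomp k m mu v nu w"
  shows "equiv_decomp k m lam u nu w"
proof -
  obtain \<sigma> \<alpha> where \<sigma>: "\<sigma> permutes {..<m}"
    and \<alpha>: "\<And>j. j < m \<Longrightarrow> (\<forall>i<k. \<alpha> j i \<noteq> 0 \<and> v (\<sigma> j) i = (\<lambda>x. \<alpha> j i * u j i x)) \<and>
                          (\<Prod>i<k. \<alpha> j i) * mu (\<sigma> j) = lam j"
    using assms(1) unfolding equiv_decomp_def by blast
  obtain \<tau> \<beta> where \<tau>: "\<tau> permutes {..<m}"
    and \<beta>: "\<And>j. j < m \<Longrightarrow> (\<forall>i<k. \<beta> j i \<noteq> 0 \<and> w (\<tau> j) i = (\<lambda>x. \<beta> j i * v j i x)) \<and>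
                          (\<Prod>i<k. \<beta> j i) * nu (\<tau> j) = mu j"
    using assms(2) unfolding equiv_decomp_def by blast
  have "(\<forall>i<k. \<beta> (\<sigma> j) i * \<alpha> j i \<noteq> 0 \<and>
           w ((\<tau> \<circ> \<sigma>) j) i = (\<lambda>x. \<beta> (\<sigma> j) i * \<alpha> j i * u j i x)) \<and>
        (\<Prod>i<k. \<beta> (\<sigma> j) i * \<alpha> j i) * nu ((\<tau> \<circ> \<sigma>) j) = lam j" if j: "j < m" for j
  proof -
    have "\<sigma> j < m" using permutes_in_image[OF \<sigma>, of j] j by simp
    then have fac_\<beta>: "\<forall>i<k. \<beta> (\<sigma> j) i \<noteq> 0 \<and> w (\<tau> (\<sigma> j)) i = (\<lambda>x. \<beta> (\<sigma> j) i * v (\<sigma> j) i x)"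
      and prod_\<beta>: "(\<Prod>i<k. \<beta> (\<sigma> j) i) * nu (\<tau> (\<sigma> j)) = mu (\<sigma> j)"
      using \<beta> by blast+
    have fac_\<alpha>: "\<forall>i<k. \<alpha> j i \<noteq> 0 \<and> v (\<sigma> j) i = (\<lambda>x. \<alpha> j i * u j i x)"
      and prod_\<alpha>: "(\<Prod>i<k. \<alpha> j i) * mu (\<sigma> j) = lam j"
      using \<alpha>[OF j] by blast+
    have "(\<Prod>i<k. \<beta> (\<sigma> j) i * \<alpha> j i) * nu ((\<tau> \<circ> \<sigma>) j)
        = (\<Prod>i<k. \<alpha> j i) * ((\<Prod>i<k. \<beta> (\<sigma> j) i) * nu (\<tau> (\<sigma> j)))"
      by (simp add: prod.distrib mult_ac)
    also have "\<dots> = lam j" unfolding prod_\<beta> prod_\<alpha> ..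
    finally show ?thesis using fac_\<alpha> fac_\<beta> by (simp add: fun_eq_iff)
  qed
  with permutes_compose[OF \<sigma> \<tau>] show ?thesis
    unfolding equiv_decomp_def
    by (intro exI[of _ "\<tau> \<circ> \<sigma>"] exI[of _ "\<lambda>j i. \<beta> (\<sigma> j) i * \<alpha> j i"]) blast
qed

text \<open>The slice of term j is outer_prod {1..<k} (u j), the term with its weight and its mode-0
factor removed.\<close>

locale ortho_indep_decomp =
  fixes k R :: nat and n :: "nat \<Rightarrow> nat" and lam :: "nat \<Rightarrow> real" and u :: "nat \<Rightarrow> nat \<Rightarrow> nat \<Rightarrow> real"
  assumes order_ge_3: "3 \<le> k"
    and weights_nonzero: "\<And>j. j < R \<Longrightarrow> lam j \<noteq> 0"
    and factors_in_Rn: "\<And>j l. j < R \<Longrightarrow> l < k \<Longrightarrow> in_Rn (n l) (u j l)"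
    and factors_nonzero: "\<And>j l. j < R \<Longrightarrow> l < k \<Longrightarrow> \<exists>x. u j l x \<noteq> 0"
    and orthonormal_0: "\<And>i j. i < R \<Longrightarrow> j < R \<Longrightarrow> ip (n 0) (u i 0) (u j 0) = (if i = j then 1 else 0)"
    and lin_indep_1: "lin_indep_on UNIV R (\<lambda>j. u j 1)"
    and lin_indep_2: "lin_indep_on UNIV R (\<lambda>j. u j 2)"
begin

lemma term_nonzero:
  assumes "j < R"
  obtains idx where "outer_prod {..<k} (u j) idx \<noteq> 0"
proof -
  obtain idx where "\<forall>l\<in>{..<k}. u j l (idx l) \<noteq> 0"
    using bchoice[of "{..<k}" "\<lambda>l x. u j l x \<noteq> 0"] factors_nonzero[OF assms] by auto
  then show thesis using that by (simp add: outer_prod_def)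
qed

lemma slices_lin_indep: "lin_indep_on UNIV R (\<lambda>j. outer_prod {1..<k} (u j))"
  by (rule outer_prod_lin_indep[where a = 1 and u = u, OF _ _ lin_indep_1])
    (use order_ge_3 factors_nonzero in auto)

lemma subslices_lin_indep: "lin_indep_on UNIV R (\<lambda>j. outer_prod {2..<k} (u j))"
  by (rule outer_prod_lin_indep[where a = 2 and u = u, OF _ _ lin_indep_2])
    (use order_ge_3 factors_nonzero in auto)

lemma slice_in_span:
  assumes eq: "tsum k R lam u = tsum k m mu v" and j: "j < R"
  shows "outer_prod {1..<k} (u j) \<in> fun_vec.span ((\<lambda>i. outer_prod {1..<k} (v i)) ` {..<m})"
proof -
  have k: "1 \<le> k" using order_ge_3 by simp
  have "lam j * outer_prod {1..<k} (u j) idx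
      = (\<Sum>i<R. lam i * ip (n 0) (u j 0) (u i 0) * outer_prod {1..<k} (u i) idx)" for idx
  proof -
    have "(\<Sum>i<R. lam i * ip (n 0) (u j 0) (u i 0) * outer_prod {1..<k} (u i) idx)
        = (\<Sum>i<R. if i = j then lam j * outer_prod {1..<k} (u j) idx else 0)"
      by (rule sum.cong) (auto simp: orthonormal_0 j)
    then show ?thesis using j by simp
  qed
  also have "\<dots> idx = (\<Sum>i<m. mu i * ip (n 0) (u j 0) (v i 0) * outer_prod {1..<k} (v i) idx)" for idx
    using tsum_contract_0[OF k, where N = "n 0" and y = "u j 0" and idx = idx] eq by metis
  finally have "outer_prod {1..<k} (u j)
      = (\<lambda>idx. \<Sum>i<m. (mu i * ip (n 0) (u j 0) (v i 0) / lam j) * outer_prod {1..<k} (v i) idx)"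
    using weights_nonzero[OF j]
    by (simp add: fun_eq_iff sum_divide_distrib[symmetric] nonzero_eq_divide_eq mult_ac)
  then show ?thesis
    unfolding span_image_lessThan_iff
    by (intro exI[of _ "\<lambda>i. mu i * ip (n 0) (u j 0) (v i 0) / lam j"])
qed

lemma tensor_rank_eq: "tensor_rank k n (tsum k R lam u) = R"
  unfolding tensor_rank_def
proof (rule Least_equality)
  show "\<exists>mu v. is_decomp k n R mu v (tsum k R lam u)"
    using factors_in_Rn by (auto simp: is_decomp_def)
next
  fix m assume "\<exists>mu v. is_decomp k n m mu v (tsum k R lam u)"
  then obtain mu v where eq: "tsum k R lam u = tsum k m mu v" by (auto simp: is_decomp_def)
  let ?S = "(\<lambda>i. outer_prod {1..<k} (v i)) ` {..<m}"
  have "R \<le> card ?S"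
    using lin_indep_le_card_span[OF slices_lin_indep, of ?S] slice_in_span[OF eq] by blast
  also have "\<dots> \<le> m" using card_image_le[of "{..<m}"] by simp
  finally show "R \<le> m" .
qed

lemma other_slices_indep_span:
  assumes "tsum k R lam u = tsum k R mu v"
  shows "lin_indep_on UNIV R (\<lambda>i. outer_prod {1..<k} (v i))"
    and "(\<lambda>i. outer_prod {1..<k} (v i)) ` {..<R} \<subseteq> fun_vec.span ((\<lambda>j. outer_prod {1..<k} (u j)) ` {..<R})"
  using lin_indep_span_exchange[OF slices_lin_indep] slice_in_span[OF assms] by blast+

lemma slice_is_multiple:
  assumes eq: "tsum k R lam u = tsum k R mu v" and i: "i < R"
  shows "\<exists>j<R. \<exists>c. outer_prod {1..<k} (v i) = (\<lambda>t. c * outer_prod {1..<k} (u j) t)"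
proof -
  let ?w = "\<lambda>j. outer_prod {1..<k} (u j)" and ?W = "\<lambda>i. outer_prod {1..<k} (v i)"
  have "?W i \<in> fun_vec.span (?w ` {..<R})"
    using other_slices_indep_span(2)[OF eq] i unfolding image_subset_iff by simp
  then obtain C where C: "?W i = (\<lambda>t. \<Sum>j<R. C j * ?w j t)"
    unfolding span_image_lessThan_iff by blast
  have split_1: "outer_prod {1..<k} x (t(1 := y)) = x 1 y * outer_prod {2..<k} x t" for x t y
  proof -
    have "{1..<k} - {1} = {2..<k}" by auto
    then show ?thesis using outer_prod_upd[of "{1..<k}" 1 x t y] order_ge_3 by simp
  qed
  obtain t0 where "?W i t0 \<noteq> 0" using lin_indep_on_nonzero[OF other_slices_indep_span(1)[OF eq] i] by blast
  then have nz: "v i 1 (t0 1) * outer_prod {2..<k} (v i) t0 \<noteq> 0"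
    using split_1[of "v i" t0 "t0 1"] by simp
  have "\<exists>j<R. \<forall>j'<R. C j' \<noteq> 0 \<longleftrightarrow> j' = j"
  proof (rule rank_one_sum_single_term[where q = "v i 1" and Z = "outer_prod {2..<k} (v i)",
        OF lin_indep_1 subslices_lin_indep _ _ _ nz])
    show "v i 1 y * outer_prod {2..<k} (v i) t = (\<Sum>j<R. C j * (u j 1 y * outer_prod {2..<k} (u j) t))"
      for y t using fun_cong[OF C, of "t(1 := y)"] by (simp only: split_1)
  qed simp_all
  then obtain j where j: "j < R" and single: "\<And>j'. j' < R \<Longrightarrow> C j' \<noteq> 0 \<longleftrightarrow> j' = j" by blast
  have "?W i = (\<lambda>t. C j * ?w j t)"
  proof
    fix t
    have "?W i t = (\<Sum>j'<R. if j' = j then C j * ?w j t else 0)"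
      unfolding C by (rule sum.cong) (use single in auto)
    then show "?W i t = C j * ?w j t" using j by simp
  qed
  then show ?thesis using j by blast
qed

lemma slices_match:
  assumes eq: "tsum k R lam u = tsum k R mu v"
  obtains \<sigma> c where "\<sigma> permutes {..<R}"
    and "\<And>i. i < R \<Longrightarrow> outer_prod {1..<k} (v i) = (\<lambda>t. c i * outer_prod {1..<k} (u (\<sigma> i)) t)"
proof -
  let ?w = "\<lambda>j. outer_prod {1..<k} (u j)" and ?W = "\<lambda>i. outer_prod {1..<k} (v i)"
  have "\<forall>i. \<exists>j c. i < R \<longrightarrow> j < R \<and> ?W i = (\<lambda>t. c * ?w j t)"
    using slice_is_multiple[OF eq] by blast
  from choice[OF this] obtain \<sigma>0
    where "\<forall>i. \<exists>c. i < R \<longrightarrow> \<sigma>0 i < R \<and> ?W i = (\<lambda>t. c * ?w (\<sigma>0 i) t)" ..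
  from choice[OF this] obtain c
    where "\<forall>i. i < R \<longrightarrow> \<sigma>0 i < R \<and> ?W i = (\<lambda>t. c i * ?w (\<sigma>0 i) t)" ..
  then have \<sigma>0: "\<And>i. i < R \<Longrightarrow> \<sigma>0 i < R \<and> ?W i = (\<lambda>t. c i * ?w (\<sigma>0 i) t)" by blast
  have W_indep: "lin_indep_on UNIV R ?W" by (rule other_slices_indep_span(1)[OF eq])
  have "inj_on \<sigma>0 {..<R}"
  proof (rule inj_onI, rule ccontr)
    fix i1 i2 assume i: "i1 \<in> {..<R}" "i2 \<in> {..<R}" "\<sigma>0 i1 = \<sigma>0 i2" "i1 \<noteq> i2"
    then have "\<forall>t. c i2 * ?W i1 t + (- c i1) * ?W i2 t = 0" using \<sigma>0 by simp
    then have "c i2 = 0" using lin_indep_on_pair(1)[OF W_indep] i by blast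
    then show False using lin_indep_on_nonzero[OF W_indep, of i2] \<sigma>0[of i2] i by auto
  qed
  then have "bij_betw \<sigma>0 {..<R} {..<R}"
    using \<sigma>0 endo_inj_surj[of "{..<R}" \<sigma>0] by (auto simp: bij_betw_def)
  then have "(\<lambda>i. if i < R then \<sigma>0 i else i) permutes {..<R}"
    by (intro bij_imp_permutes) (auto simp: bij_betw_def inj_on_def image_def)
  then show thesis using that[of "\<lambda>i. if i < R then \<sigma>0 i else i" c] \<sigma>0 by auto
qed

lemma first_factors_match:
  assumes eq: "tsum k R lam u = tsum k R mu v" and \<sigma>: "\<sigma> permutes {..<R}"
    and c: "\<And>i. i < R \<Longrightarrow> outer_prod {1..<k} (v i) = (\<lambda>t. c i * outer_prod {1..<k} (u (\<sigma> i)) t)"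
    and i: "i < R"
  shows "lam (\<sigma> i) * u (\<sigma> i) 0 x = mu i * c i * v i 0 x"
proof -
  let ?w = "\<lambda>j. outer_prod {1..<k} (u j)"
  have k: "1 \<le> k" using order_ge_3 by simp
  have "lin_indep_on UNIV R (\<lambda>i. ?w (\<sigma> i))"
    using lin_indep_on_reindex[OF slices_lin_indep permutes_inj_on[OF \<sigma>]] permutes_image[OF \<sigma>] by simp
  moreover have "\<forall>t. (\<Sum>i<R. (lam (\<sigma> i) * u (\<sigma> i) 0 x - mu i * c i * v i 0 x) * ?w (\<sigma> i) t) = 0"
  proof
    fix t
    have "(\<Sum>i<R. lam (\<sigma> i) * u (\<sigma> i) 0 x * ?w (\<sigma> i) t) = tsum k R lam u (t(0 := x))"
      using sum.reindex_bij_betw[OF permutes_imp_bij[OF \<sigma>], of "\<lambda>j. lam j * u j 0 x * ?w j t"]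
      by (simp add: tsum_upd_0[OF k])
    also have "\<dots> = tsum k R mu v (t(0 := x))" by (simp add: eq)
    also have "\<dots> = (\<Sum>i<R. mu i * c i * v i 0 x * ?w (\<sigma> i) t)"
      unfolding tsum_upd_0[OF k] by (rule sum.cong) (simp_all add: c del: One_nat_def)
    finally show "(\<Sum>i<R. (lam (\<sigma> i) * u (\<sigma> i) 0 x - mu i * c i * v i 0 x) * ?w (\<sigma> i) t) = 0"
      by (simp add: left_diff_distrib sum_subtractf)
  qed
  ultimately show ?thesis
    using i unfolding lin_indep_on_def
    by (elim allE[of _ "\<lambda>i. lam (\<sigma> i) * u (\<sigma> i) 0 x - mu i * c i * v i 0 x"]) simp
qed

lemma matched_terms_proportional:
  assumes eq: "tsum k R lam u = tsum k R mu v" and \<sigma>: "\<sigma> permutes {..<R}"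
    and c: "\<And>i. i < R \<Longrightarrow> outer_prod {1..<k} (v i) = (\<lambda>t. c i * outer_prod {1..<k} (u (\<sigma> i)) t)"
    and i: "i < R"
  shows "lam (\<sigma> i) * outer_prod {..<k} (u (\<sigma> i)) idx = mu i * outer_prod {..<k} (v i) idx"
proof -
  have k: "1 \<le> k" using order_ge_3 by simp
  have "lam (\<sigma> i) * outer_prod {..<k} (u (\<sigma> i)) idx
      = (lam (\<sigma> i) * u (\<sigma> i) 0 (idx 0)) * outer_prod {1..<k} (u (\<sigma> i)) idx"
    by (simp add: outer_prod_split_0[OF k])
  also have "\<dots> = mu i * (v i 0 (idx 0) * (c i * outer_prod {1..<k} (u (\<sigma> i)) idx))"
    by (simp add: first_factors_match[OF eq \<sigma> c i])
  also have "\<dots> = mu i * outer_prod {..<k} (v i) idx"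
    by (simp add: outer_prod_split_0[OF k] c[OF i] del: One_nat_def)
  finally show ?thesis .
qed

lemma equiv_to_reference:
  assumes "is_decomp k n R mu v (tsum k R lam u)"
  shows "equiv_decomp k R mu v lam u"
proof -
  have eq: "tsum k R lam u = tsum k R mu v" using assms by (simp add: is_decomp_def)
  obtain \<sigma> c where \<sigma>: "\<sigma> permutes {..<R}"
    and c: "\<And>i. i < R \<Longrightarrow> outer_prod {1..<k} (v i) = (\<lambda>t. c i * outer_prod {1..<k} (u (\<sigma> i)) t)"
    using slices_match[OF eq] by blast
  have "\<exists>\<alpha>. i < R \<longrightarrow> (\<forall>l<k. \<alpha> l \<noteq> 0 \<and> u (\<sigma> i) l = (\<lambda>x. \<alpha> l * v i l x)) \<and>
          (\<Prod>l<k. \<alpha> l) * lam (\<sigma> i) = mu i" for i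
  proof (cases "i < R")
    case i: True
    have \<sigma>i: "\<sigma> i < R" using permutes_in_image[OF \<sigma>, of i] i by simp
    note term_eq = matched_terms_proportional[OF eq \<sigma> c i]
    obtain idx0 where nz: "outer_prod {..<k} (u (\<sigma> i)) idx0 \<noteq> 0" using term_nonzero[OF \<sigma>i] .
    then have mu_i: "mu i \<noteq> 0" and nz_v: "outer_prod {..<k} (v i) idx0 \<noteq> 0"
      using term_eq[of idx0] weights_nonzero[OF \<sigma>i] by auto
    have "\<exists>\<beta>. (\<forall>l\<in>{..<k}. \<beta> l \<noteq> 0 \<and> u (\<sigma> i) l = (\<lambda>x. \<beta> l * v i l x)) \<and>
        (\<Prod>l\<in>{..<k}. \<beta> l) = mu i / lam (\<sigma> i)"
    proof (rule outer_prod_eq_scaled_factors[OF _ _ _ nz_v])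
      show "outer_prod {..<k} (u (\<sigma> i)) idx = mu i / lam (\<sigma> i) * outer_prod {..<k} (v i) idx" for idx
        using term_eq[of idx] weights_nonzero[OF \<sigma>i] by (simp add: field_simps)
    qed (use mu_i weights_nonzero[OF \<sigma>i] in auto)
    then show ?thesis using weights_nonzero[OF \<sigma>i] by auto
  qed simp
  from choice[OF allI[OF this]] obtain \<alpha>
    where "\<forall>i. i < R \<longrightarrow> (\<forall>l<k. \<alpha> i l \<noteq> 0 \<and> u (\<sigma> i) l = (\<lambda>x. \<alpha> i l * v i l x)) \<and>
            (\<Prod>l<k. \<alpha> i l) * lam (\<sigma> i) = mu i" ..
  with \<sigma> show ?thesis unfolding equiv_decomp_def by (intro exI[of _ \<sigma>] exI[of _ \<alpha>]) blast
qed

lemma tsum_identifiable: "identifiable k n (tsum k R lam u)"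
  unfolding identifiable_iff_equiv_decomp tensor_rank_eq
proof (intro allI impI)
  fix lam' u' mu v
  assume "is_decomp k n R lam' u' (tsum k R lam u) \<and> is_decomp k n R mu v (tsum k R lam u)"
  then have "equiv_decomp k R lam' u' lam u" and "equiv_decomp k R mu v lam u"
    using equiv_to_reference by blast+
  then show "equiv_decomp k R lam' u' mu v" by (blast intro: equiv_decomp_trans equiv_decomp_sym)
qed

end

section \<open>Decompositions of type P_s\<close>

lemma tsum_nonzero_terms:
  obtains R h where "bij_betw h {..<R} {i. i < r \<and> sig i \<noteq> 0}"
    and "tsum k r sig a = tsum k R (\<lambda>i. sig (h i)) (\<lambda>i. a (h i))"
proof -
  let ?J = "{i. i < r \<and> sig i \<noteq> 0}"
  obtain h where h: "bij_betw h {..<card ?J} ?J"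
    using ex_bij_betw_nat_finite[of ?J] by (auto simp: atLeast0LessThan)
  have "tsum k r sig a idx = tsum k (card ?J) (\<lambda>i. sig (h i)) (\<lambda>i. a (h i)) idx" for idx
  proof -
    have "tsum k r sig a idx = (\<Sum>j\<in>?J. sig j * (\<Prod>l<k. a j l (idx l)))"
      unfolding tsum_def by (rule sum.mono_neutral_right) auto
    also have "\<dots> = (\<Sum>i<card ?J. sig (h i) * (\<Prod>l<k. a (h i) l (idx l)))"
      by (rule sum.reindex_bij_betw[OF h, symmetric])
    finally show ?thesis by (simp add: tsum_def)
  qed
  then show thesis using that h by blast
qed

lemma P_decomp_identifiable:
  assumes k: "3 \<le> k" and s: "1 \<le> s" and P: "P_decomp k n s r sig a T"
    and rank: "\<And>l. l \<in> {1, 2} \<Longrightarrow> s \<le> l \<Longrightarrow> full_col_rank (n l) r (\<lambda>j. a j l)"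
  shows "identifiable k n T"
proof -
  have unit: "\<And>i l. i < r \<Longrightarrow> l < k \<Longrightarrow> unit_vec (n l) (a i l)"
    and orth: "\<And>l i j. l < s \<Longrightarrow> i < r \<Longrightarrow> j < r \<Longrightarrow> i \<noteq> j \<Longrightarrow> ip (n l) (a i l) (a j l) = 0"
    using P by (auto simp: P_decomp_def)
  obtain R h where h: "bij_betw h {..<R} {i. i < r \<and> sig i \<noteq> 0}"
    and T: "T = tsum k R (\<lambda>i. sig (h i)) (\<lambda>i. a (h i))"
    using tsum_nonzero_terms P by (metis P_decomp_def)
  have inj: "inj_on h {..<R}" and hR: "\<And>i. i < R \<Longrightarrow> h i < r \<and> sig (h i) \<noteq> 0"
    using h by (auto simp: bij_betw_def)
  have orthonormal: "ip (n l) (a (h i) l) (a (h j) l) = (if i = j then 1 else 0)"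
    if "l < s" "l < k" "i < R" "j < R" for l i j
    using unit[of "h i" l] orth[of l "h i" "h j"] hR inj_onD[OF inj] that by (auto simp: unit_vec_def)
  have indep: "lin_indep_on UNIV R (\<lambda>j. a (h j) l)" if "l \<in> {1, 2}" for l
  proof (cases "l < s")
    case True
    then have "lin_indep_on {..<n l} R (\<lambda>j. a (h j) l)"
      using that k by (intro orthonormal_imp_lin_indep_on orthonormal) auto
    then show ?thesis by (rule lin_indep_on_mono) simp
  next
    case False
    then have "lin_indep_on {..<n l} r (\<lambda>j. a j l)"
      using rank[OF that] by (simp add: full_col_rank_iff_lin_indep_on)
    from lin_indep_on_reindex[OF this inj] show ?thesis
      using hR by (auto intro: lin_indep_on_mono)
  qed
  have "ortho_indep_decomp k R n (\<lambda>i. sig (h i)) (\<lambda>i. a (h i))"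
  proof
    show "lin_indep_on UNIV R (\<lambda>j. a (h j) 1)" "lin_indep_on UNIV R (\<lambda>j. a (h j) 2)"
      using indep by simp_all
    show "ip (n 0) (a (h i) 0) (a (h j) 0) = (if i = j then 1 else 0)" if "i < R" "j < R" for i j
      using orthonormal[of 0] s k that by simp
    show "\<exists>x. a (h j) l x \<noteq> 0" if "j < R" "l < k" for j l
      using unit_vec_nonzero[OF unit[of "h j" l]] hR[of j] that by simp
    show "in_Rn (n l) (a (h j) l)" if "j < R" "l < k" for j l
      using unit[of "h j" l] hR[of j] that by (simp add: unit_vec_def)
  qed (use k hR in auto)
  then show ?thesis unfolding T by (rule ortho_indep_decomp.tsum_identifiable)
qed

theorem proposition3p2:
  fixes k s r :: nat and n :: "nat \<Rightarrow> nat"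
  assumes "k \<ge> 3" and "1 \<le> s" and "s \<le> k" and "\<forall>l<s. r \<le> n l"
  shows "(\<forall>T sig a. P_decomp k n s r sig a T \<and>
            (\<forall>l. s \<le> l \<and> l < k \<longrightarrow> full_col_rank (n l) r (\<lambda>j. a j l))
            \<longrightarrow> identifiable k n T)
       \<and> (s \<ge> 3 \<longrightarrow> (\<forall>T\<in>P_set k n s r. identifiable k n T))"
proof (intro conjI allI impI ballI)
  fix T sig a
  assume "P_decomp k n s r sig a T \<and> (\<forall>l. s \<le> l \<and> l < k \<longrightarrow> full_col_rank (n l) r (\<lambda>j. a j l))"
  then show "identifiable k n T"
    using P_decomp_identifiable[OF assms(1,2)] assms(1) by force
next
  fix T assume "3 \<le> s" "T \<in> P_set k n s r"
  then show "identifiable k n T"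
    using P_decomp_identifiable[OF assms(1,2)] unfolding P_set_def by force
qed

end
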